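(* Let $G$ be a cubical $\omega$-category with connections, and $1\le m\le n$. If $1\le i\le m$ then $\Phi_m\varepsilon_i=\varepsilon_1\Phi_{m-1}$ as maps $G_{n-1}\to G_n$. If $1\le i\le m-1$ then $\Phi_m\Gamma^\alpha_i=\varepsilon_1\Phi_{m-1}$ as maps $G_{n-1}\to G_n$, for $\alpha=\pm$.
   Context: A cubical $\omega$-category with connections $G$ consists of sets $G_n$ ($n\ge0$), face maps $\partial^\alpha_i:G_n\to G_{n-1}$, degeneracies $\varepsilon_i:G_{n-1}\to G_n$, connections $\Gamma^\alpha_i:G_n\to G_{n+1}$ ($1\le i\le n$, $\alpha=\pm$) and partial compositions $\circ_j$ on $G_n$ ($1\le j\le n$, $a\circ_jb$ defined iff $\partial^+_ja=\partial^-_jb$) satisfying: $\partial^\alpha_i\partial^\beta_j=\partial^\beta_{j-1}\partial^\alpha_i$ ($i<j$), $\varepsilon_i\varepsilon_j=\varepsilon_{j+1}\varepsilon_i$ ($i\le j$), $\partial^\alpha_i\varepsilon_j=\varepsilon_{j-1}\partial^\alpha_i$ ($i<j$), $\varepsilon_j\partial^\alpha_{i-1}$ ($i>j$), $\mathrm{id}$ ($i=j$); $\Gamma^\alpha_i\Gamma^\beta_j=\Gamma^\beta_{j+1}\Gamma^\alpha_i$ ($i<j$), $\Gamma^\alpha_i\Gamma^\alpha_i=\Gamma^\alpha_{i+1}\Gamma^\alpha_i$, $\Gamma^\alpha_i\varepsilon_j=\varepsilon_{j+1}\Gamma^\alpha_i$ ($i<j$), $\varepsilon_j\Gamma^\alpha_{i-1}$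 ($i>j$), $\Gamma^\alpha_j\varepsilon_j=\varepsilon_{j+1}\varepsilon_j$, $\partial^\alpha_i\Gamma^\beta_j=\Gamma^\beta_{j-1}\partial^\alpha_i$ ($i<j$), $\Gamma^\beta_j\partial^\alpha_{i-1}$ ($i>j+1$), $\partial^\alpha_j\Gamma^\alpha_j=\partial^\alpha_{j+1}\Gamma^\alpha_j=\mathrm{id}$, $\partial^\alpha_j\Gamma^{-\alpha}_j=\partial^\alpha_{j+1}\Gamma^{-\alpha}_j=\varepsilon_j\partial^\alpha_j$; $\partial^-_j(a\circ_jb)=\partial^-_ja$, $\partial^+_j(a\circ_jb)=\partial^+_jb$, $\partial^\alpha_i(a\circ_jb)=\partial^\alpha_ia\circ_{j-1}\partial^\alpha_ib$ ($i<j$), $\partial^\alpha_ia\circ_j\partial^\alpha_ib$ ($i>j$); interchange for $i\ne j$; $\varepsilon_i(a\circ_jb)=\varepsilon_ia\circ_{j+1}\varepsilon_ib$ ($i\le j$), $\varepsilon_ia\circ_j\varepsilon_ib$ ($i>j$); $\Gamma^\alpha_i(a\circ_jb)=\Gamma^\alpha_ia\circ_{j+1}\Gamma^\alpha_ib$ ($i<j$), $\Gamma^\alpha_ia\circ_j\Gamma^\alpha_ib$ ($i>j$); $\Gamma^+_j(a\circ_jb)=(\Gamma^+_ja\circ_j\varepsilon_ja)\circ_{j+1}(\varepsilon_{j+1}a\circ_j\Gamma^+_jb)$, $\Gamma^-_j(a\circ_jb)=(\Gamma^-_ja\circ_j\varepsilon_{j+1}b)\circ_{j+1}(\varepsilon_jb\circ_j\Gamma^-_jb)$;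 each $\circ_j$ is a category structure with identities $\varepsilon_jy$; $\Gamma^+_ix\circ_i\Gamma^-_ix=\varepsilon_{i+1}x$, $\Gamma^+_ix\circ_{i+1}\Gamma^-_ix=\varepsilon_ix$. Folding operations on $G_k$: $\psi_ix=\Gamma^+_i\partial^-_{i+1}x\circ_{i+1}x\circ_{i+1}\Gamma^-_i\partial^+_{i+1}x$ ($1\le i\le k-1$), $\Psi_r=\psi_{r-1}\cdots\psi_1$ ($1\le r\le k$), $\Phi_m=\Psi_1\Psi_2\cdots\Psi_m$ ($0\le m\le k$). *)

theory Defs
  imports Main
begin

text \<open>Every operation is indexed by the dimension n of its (first) argument:
  face n i \<alpha> : G_n \<rightarrow> G_(n-1)   (1 \<le> i \<le> n),
  degen n i : G_n \<rightarrow> G_(n+1)      (1 \<le> i \<le> n+1), i.e. epsilon_i,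
  conn n i \<alpha> : G_n \<rightarrow> G_(n+1)   (1 \<le> i \<le> n), i.e. Gamma^alpha_i,
  comp n j a b : a \<circ>_j b in G_n  (1 \<le> j \<le> n).
  Signs: True = +, False = -.\<close>

record 'a cubical_data =
  cells :: "nat \<Rightarrow> 'a set"
  face  :: "nat \<Rightarrow> nat \<Rightarrow> bool \<Rightarrow> 'a \<Rightarrow> 'a"
  degen :: "nat \<Rightarrow> nat \<Rightarrow> 'a \<Rightarrow> 'a"
  conn  :: "nat \<Rightarrow> nat \<Rightarrow> bool \<Rightarrow> 'a \<Rightarrow> 'a"
  comp  :: "nat \<Rightarrow> nat \<Rightarrow> 'a \<Rightarrow> 'a \<Rightarrow> 'a"

definition composable :: "'a cubical_data \<Rightarrow> nat \<Rightarrow> nat \<Rightarrow> 'a \<Rightarrow> 'a \<Rightarrow> bool" where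
  "composable C n j a b \<longleftrightarrow> a \<in> cells C n \<and> b \<in> cells C n \<and> 1 \<le> j \<and> j \<le> n
      \<and> face C n j True a = face C n j False b"

definition cubical_omega_cat_conn :: "'a cubical_data \<Rightarrow> bool" where
  "cubical_omega_cat_conn C \<longleftrightarrow>
   \<comment> \<open>closure of the operations\<close>
   (\<forall>n i \<alpha> x. x \<in> cells C n \<and> 1 \<le> i \<and> i \<le> n \<longrightarrow> face C n i \<alpha> x \<in> cells C (n - 1)) \<and>
   (\<forall>n i x. x \<in> cells C n \<and> 1 \<le> i \<and> i \<le> n + 1 \<longrightarrow> degen C n i x \<in> cells C (n + 1)) \<and>
   (\<forall>n i \<alpha> x. x \<in> cells C n \<and> 1 \<le> i \<and> i \<le> n \<longrightarrow> conn C n i \<alpha> x \<in> cells C (n + 1)) \<and>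
   (\<forall>n j a b. composable C n j a b \<longrightarrow> comp C n j a b \<in> cells C n) \<and>
   \<comment> \<open>face-face\<close>
   (\<forall>n i j \<alpha> \<beta> x. x \<in> cells C n \<and> 1 \<le> i \<and> i < j \<and> j \<le> n \<longrightarrow>
      face C (n - 1) i \<alpha> (face C n j \<beta> x) = face C (n - 1) (j - 1) \<beta> (face C n i \<alpha> x)) \<and>
   \<comment> \<open>degeneracy-degeneracy\<close>
   (\<forall>n i j x. x \<in> cells C n \<and> 1 \<le> i \<and> i \<le> j \<and> j \<le> n + 1 \<longrightarrow>
      degen C (n + 1) i (degen C n j x) = degen C (n + 1) (j + 1) (degen C n i x)) \<and>
   \<comment> \<open>face-degeneracy\<close>
   (\<forall>n i j \<alpha> x. x \<in> cells C n \<and> 1 \<le> i \<and> i \<le> n + 1 \<and> 1 \<le> j \<and> j \<le> n + 1 \<longrightarrow>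
      face C (n + 1) i \<alpha> (degen C n j x) =
        (if i < j then degen C (n - 1) (j - 1) (face C n i \<alpha> x)
         else if j < i then degen C (n - 1) j (face C n (i - 1) \<alpha> x)
         else x)) \<and>
   \<comment> \<open>connection-connection\<close>
   (\<forall>n i j \<alpha> \<beta> x. x \<in> cells C n \<and> 1 \<le> i \<and> i < j \<and> j \<le> n \<longrightarrow>
      conn C (n + 1) i \<alpha> (conn C n j \<beta> x) = conn C (n + 1) (j + 1) \<beta> (conn C n i \<alpha> x)) \<and>
   (\<forall>n i \<alpha> x. x \<in> cells C n \<and> 1 \<le> i \<and> i \<le> n \<longrightarrow>
      conn C (n + 1) i \<alpha> (conn C n i \<alpha> x) = conn C (n + 1) (i + 1) \<alpha> (conn C n i \<alpha> x)) \<and>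
   \<comment> \<open>connection-degeneracy\<close>
   (\<forall>n i j \<alpha> x. x \<in> cells C n \<and> 1 \<le> i \<and> i \<le> n + 1 \<and> 1 \<le> j \<and> j \<le> n + 1 \<longrightarrow>
      conn C (n + 1) i \<alpha> (degen C n j x) =
        (if i < j then degen C (n + 1) (j + 1) (conn C n i \<alpha> x)
         else if j < i then degen C (n + 1) j (conn C n (i - 1) \<alpha> x)
         else degen C (n + 1) (j + 1) (degen C n j x))) \<and>
   \<comment> \<open>face-connection\<close>
   (\<forall>n i j \<alpha> \<beta> x. x \<in> cells C n \<and> 1 \<le> j \<and> j \<le> n \<and> 1 \<le> i \<and> i \<le> n + 1 \<longrightarrow>
      face C (n + 1) i \<alpha> (conn C n j \<beta> x) =
        (if i < j then conn C (n - 1) (j - 1) \<beta> (face C n i \<alpha> x)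
         else if j + 1 < i then conn C (n - 1) j \<beta> (face C n (i - 1) \<alpha> x)
         else if \<alpha> = \<beta> then x
         else degen C (n - 1) j (face C n j \<alpha> x))) \<and>
   \<comment> \<open>faces of composites\<close>
   (\<forall>n j a b. composable C n j a b \<longrightarrow>
      face C n j False (comp C n j a b) = face C n j False a \<and>
      face C n j True (comp C n j a b) = face C n j True b \<and>
      (\<forall>i \<alpha>. 1 \<le> i \<and> i < j \<longrightarrow>
         face C n i \<alpha> (comp C n j a b) = comp C (n - 1) (j - 1) (face C n i \<alpha> a) (face C n i \<alpha> b)) \<and>
      (\<forall>i \<alpha>. j < i \<and> i \<le> n \<longrightarrow>
         face C n i \<alpha> (comp C n j a b) = comp C (n - 1) j (face C n i \<alpha> a) (face C n i \<alpha> b))) \<and>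
   \<comment> \<open>interchange\<close>
   (\<forall>n i j a b c d. i \<noteq> j \<and> composable C n i a b \<and> composable C n i c d \<and>
        composable C n j a c \<and> composable C n j b d \<longrightarrow>
      comp C n j (comp C n i a b) (comp C n i c d) = comp C n i (comp C n j a c) (comp C n j b d)) \<and>
   \<comment> \<open>degeneracies of composites\<close>
   (\<forall>n i j a b. composable C n j a b \<and> 1 \<le> i \<and> i \<le> n + 1 \<longrightarrow>
      degen C n i (comp C n j a b) =
        (if i \<le> j then comp C (n + 1) (j + 1) (degen C n i a) (degen C n i b)
         else comp C (n + 1) j (degen C n i a) (degen C n i b))) \<and>
   \<comment> \<open>connections of composites\<close>
   (\<forall>n i j \<alpha> a b. composable C n j a b \<and> 1 \<le> i \<and> i \<le> n \<and> i \<noteq> j \<longrightarrow>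
      conn C n i \<alpha> (comp C n j a b) =
        (if i < j then comp C (n + 1) (j + 1) (conn C n i \<alpha> a) (conn C n i \<alpha> b)
         else comp C (n + 1) j (conn C n i \<alpha> a) (conn C n i \<alpha> b))) \<and>
   (\<forall>n j a b. composable C n j a b \<longrightarrow>
      conn C n j True (comp C n j a b) =
        comp C (n + 1) (j + 1)
          (comp C (n + 1) j (conn C n j True a) (degen C n j a))
          (comp C (n + 1) j (degen C n (j + 1) a) (conn C n j True b))) \<and>
   (\<forall>n j a b. composable C n j a b \<longrightarrow>
      conn C n j False (comp C n j a b) =
        comp C (n + 1) (j + 1)
          (comp C (n + 1) j (conn C n j False a) (degen C n (j + 1) b))
          (comp C (n + 1) j (degen C n j b) (conn C n j False b))) \<and>
   \<comment> \<open>each \<circ>_j is a category with identities \<epsilon>_j y\<close>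
   (\<forall>n j a b c. composable C n j a b \<and> composable C n j b c \<longrightarrow>
      comp C n j (comp C n j a b) c = comp C n j a (comp C n j b c)) \<and>
   (\<forall>n j a. a \<in> cells C n \<and> 1 \<le> j \<and> j \<le> n \<longrightarrow>
      comp C n j (degen C (n - 1) j (face C n j False a)) a = a \<and>
      comp C n j a (degen C (n - 1) j (face C n j True a)) = a) \<and>
   \<comment> \<open>connection cancellation laws\<close>
   (\<forall>n i x. x \<in> cells C n \<and> 1 \<le> i \<and> i \<le> n \<longrightarrow>
      comp C (n + 1) i (conn C n i True x) (conn C n i False x) = degen C n (i + 1) x \<and>
      comp C (n + 1) (i + 1) (conn C n i True x) (conn C n i False x) = degen C n i x)"

definition psi :: "'a cubical_data \<Rightarrow> nat \<Rightarrow> nat \<Rightarrow> 'a \<Rightarrow> 'a" where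
  "psi C k i x =
     comp C k (i + 1)
       (comp C k (i + 1) (conn C (k - 1) i True (face C k (i + 1) False x)) x)
       (conn C (k - 1) i False (face C k (i + 1) True x))"

fun Psi :: "'a cubical_data \<Rightarrow> nat \<Rightarrow> nat \<Rightarrow> 'a \<Rightarrow> 'a" where
  "Psi C k 0 x = x"
| "Psi C k (Suc 0) x = x"
| "Psi C k (Suc (Suc r)) x = psi C k (Suc r) (Psi C k (Suc r) x)"

fun Phi :: "'a cubical_data \<Rightarrow> nat \<Rightarrow> nat \<Rightarrow> 'a \<Rightarrow> 'a" where
  "Phi C k 0 x = x"
| "Phi C k (Suc m) x = Phi C k m (Psi C k (Suc m) x)"

end

theory Submission
  imports Defs
begin

text \<open>
  The degeneracy or connection is pushed through the foldings \<psi>_j one at a time. Away from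
  its index, \<psi>_j commutes with \<epsilon>_k and \<Gamma>_k up to a shift of index, while
  \<psi>_i \<epsilon>_i = \<psi>_i \<epsilon>_(i+1) = \<psi>_i \<Gamma>^\<alpha>_i = \<epsilon>_i. The one genuinely two-dimensional relation is
  \<psi>_(i+1) \<psi>_i \<Gamma>^\<alpha>_(i+1) = \<Gamma>^(-\<alpha>)_i \<psi>_i, obtained from the transport laws, interchange
  and the cancellation laws for connections. Consequently \<Psi>_m sends \<epsilon>_i to \<epsilon>_max(1,i-1)
  and \<Gamma>^\<alpha>_i to \<Gamma>^(-\<alpha>)_(i-1) (to \<epsilon>_1 if i = 1), and induction on m gives the theorem.
\<close>

text \<open>
  Reversing every direction is a symmetry of the axioms that fixes \<psi>; it turns the
  relation for \<Gamma>^+ into the one for \<Gamma>^-.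
\<close>

definition reverse :: "'a cubical_data \<Rightarrow> 'a cubical_data" where
  "reverse C = C\<lparr>face := \<lambda>n i \<alpha>. face C n i (\<not> \<alpha>), conn := \<lambda>n i \<alpha>. conn C n i (\<not> \<alpha>),
     comp := \<lambda>n j a b. comp C n j b a\<rparr>"

lemma reverse_simps [simp]:
  "cells (reverse C) = cells C"
  "face (reverse C) n i \<alpha> = face C n i (\<not> \<alpha>)"
  "degen (reverse C) = degen C"
  "conn (reverse C) n i \<alpha> = conn C n i (\<not> \<alpha>)"
  "comp (reverse C) n j a b = comp C n j b a"
  by (simp_all add: reverse_def)

lemma composable_reverse: "composable (reverse C) n j a b \<longleftrightarrow> composable C n j b a"
  by (auto simp: composable_def)

lemma cubical_omega_cat_conn_reverse:
  "cubical_omega_cat_conn C \<Longrightarrow> cubical_omega_cat_conn (reverse C)"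
  unfolding cubical_omega_cat_conn_def composable_reverse by simp

locale cubical_omega_category =
  fixes C :: "'a cubical_data"
  assumes axioms: "cubical_omega_cat_conn C"
begin

abbreviation "G \<equiv> cells C"
abbreviation bdry ("\<partial>") where "\<partial> \<equiv> face C"
abbreviation "\<epsilon> \<equiv> degen C"
abbreviation "\<Gamma> \<equiv> conn C"
abbreviation cmp ("(_ \<circ>\<^bsub>_,_\<^esub>/ _)" [65, 0, 0, 66] 65) where "a \<circ>\<^bsub>n,j\<^esub> b \<equiv> comp C n j a b"

lemmas laws = axioms[unfolded cubical_omega_cat_conn_def]

text \<open>The axioms, restated with successor dimensions so that they work as rewrite rules.\<close>

lemma face_closed [simp]: "x \<in> G (Suc n) \<Longrightarrow> 1 \<le> i \<Longrightarrow> i \<le> Suc n \<Longrightarrow> \<partial> (Suc n) i \<alpha> x \<in> G n"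
  using laws[THEN conjunct1, rule_format, of x "Suc n" i \<alpha>] by simp

lemma degen_closed [simp]: "x \<in> G n \<Longrightarrow> 1 \<le> i \<Longrightarrow> i \<le> Suc n \<Longrightarrow> \<epsilon> n i x \<in> G (Suc n)"
  using laws by simp

lemma conn_closed [simp]: "x \<in> G n \<Longrightarrow> 1 \<le> i \<Longrightarrow> i \<le> n \<Longrightarrow> \<Gamma> n i \<alpha> x \<in> G (Suc n)"
  using laws by simp

lemma comp_closed [simp]: "composable C n j a b \<Longrightarrow> a \<circ>\<^bsub>n,j\<^esub> b \<in> G n"
  using laws by simp

lemma face_degen_less [simp]: "x \<in> G (Suc n) \<Longrightarrow> 1 \<le> i \<Longrightarrow> i < j \<Longrightarrow> j \<le> Suc (Suc n) \<Longrightarrow>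
    \<partial> (Suc (Suc n)) i \<alpha> (\<epsilon> (Suc n) j x) = \<epsilon> n (j - 1) (\<partial> (Suc n) i \<alpha> x)"
  using laws by simp

lemma face_degen_greater [simp]: "x \<in> G (Suc n) \<Longrightarrow> 1 \<le> j \<Longrightarrow> j < i \<Longrightarrow> i \<le> Suc (Suc n) \<Longrightarrow>
    \<partial> (Suc (Suc n)) i \<alpha> (\<epsilon> (Suc n) j x) = \<epsilon> n j (\<partial> (Suc n) (i - 1) \<alpha> x)"
  using laws by simp

lemma face_degen_same [simp]: "x \<in> G n \<Longrightarrow> 1 \<le> i \<Longrightarrow> i \<le> Suc n \<Longrightarrow> \<partial> (Suc n) i \<alpha> (\<epsilon> n i x) = x"
  using laws by simp

lemma conn_conn_less: "x \<in> G n \<Longrightarrow> 1 \<le> i \<Longrightarrow> i < j \<Longrightarrow> j \<le> n \<Longrightarrow>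
    \<Gamma> (Suc n) i \<alpha> (\<Gamma> n j \<beta> x) = \<Gamma> (Suc n) (Suc j) \<beta> (\<Gamma> n i \<alpha> x)"
  using laws by simp

lemma conn_conn_same: "x \<in> G n \<Longrightarrow> 1 \<le> i \<Longrightarrow> i \<le> n \<Longrightarrow>
    \<Gamma> (Suc n) i \<alpha> (\<Gamma> n i \<alpha> x) = \<Gamma> (Suc n) (Suc i) \<alpha> (\<Gamma> n i \<alpha> x)"
  using laws by simp

lemma conn_degen_less: "x \<in> G n \<Longrightarrow> 1 \<le> i \<Longrightarrow> i < j \<Longrightarrow> j \<le> Suc n \<Longrightarrow>
    \<Gamma> (Suc n) i \<alpha> (\<epsilon> n j x) = \<epsilon> (Suc n) (Suc j) (\<Gamma> n i \<alpha> x)"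
  using laws by simp

lemma conn_degen_greater: "x \<in> G n \<Longrightarrow> 1 \<le> j \<Longrightarrow> j < i \<Longrightarrow> i \<le> Suc n \<Longrightarrow>
    \<Gamma> (Suc n) i \<alpha> (\<epsilon> n j x) = \<epsilon> (Suc n) j (\<Gamma> n (i - 1) \<alpha> x)"
  using laws by simp

lemma conn_degen_same: "x \<in> G n \<Longrightarrow> 1 \<le> j \<Longrightarrow> j \<le> Suc n \<Longrightarrow>
    \<Gamma> (Suc n) j \<alpha> (\<epsilon> n j x) = \<epsilon> (Suc n) (Suc j) (\<epsilon> n j x)"
  using laws by simp

lemma face_conn_less [simp]: "x \<in> G (Suc n) \<Longrightarrow> 1 \<le> i \<Longrightarrow> i < j \<Longrightarrow> j \<le> Suc n \<Longrightarrow>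
    \<partial> (Suc (Suc n)) i \<alpha> (\<Gamma> (Suc n) j \<beta> x) = \<Gamma> n (j - 1) \<beta> (\<partial> (Suc n) i \<alpha> x)"
  using laws by simp

lemma face_conn_greater [simp]: "x \<in> G (Suc n) \<Longrightarrow> 1 \<le> j \<Longrightarrow> Suc j < i \<Longrightarrow> i \<le> Suc (Suc n) \<Longrightarrow>
    \<partial> (Suc (Suc n)) i \<alpha> (\<Gamma> (Suc n) j \<beta> x) = \<Gamma> n j \<beta> (\<partial> (Suc n) (i - 1) \<alpha> x)"
  using laws by simp

lemma face_conn_same [simp]: "x \<in> G n \<Longrightarrow> 1 \<le> j \<Longrightarrow> j \<le> n \<Longrightarrow> \<partial> (Suc n) j \<alpha> (\<Gamma> n j \<alpha> x) = x"
  using laws by simp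

lemma face_succ_conn_same [simp]: "x \<in> G n \<Longrightarrow> 1 \<le> j \<Longrightarrow> j \<le> n \<Longrightarrow> \<partial> (Suc n) (Suc j) \<alpha> (\<Gamma> n j \<alpha> x) = x"
  using laws by simp

lemma face_conn_opposite [simp]: "x \<in> G (Suc n) \<Longrightarrow> 1 \<le> j \<Longrightarrow> j \<le> Suc n \<Longrightarrow> \<beta> \<noteq> \<alpha> \<Longrightarrow>
    \<partial> (Suc (Suc n)) j \<alpha> (\<Gamma> (Suc n) j \<beta> x) = \<epsilon> n j (\<partial> (Suc n) j \<alpha> x)"
  using laws by simp

lemma face_succ_conn_opposite [simp]: "x \<in> G (Suc n) \<Longrightarrow> 1 \<le> j \<Longrightarrow> j \<le> Suc n \<Longrightarrow> \<beta> \<noteq> \<alpha> \<Longrightarrow>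
    \<partial> (Suc (Suc n)) (Suc j) \<alpha> (\<Gamma> (Suc n) j \<beta> x) = \<epsilon> n j (\<partial> (Suc n) j \<alpha> x)"
  using laws by simp

lemma face_comp_minus [simp]: "composable C n j a b \<Longrightarrow> \<partial> n j False (a \<circ>\<^bsub>n,j\<^esub> b) = \<partial> n j False a"
  using laws by simp

lemma face_comp_plus [simp]: "composable C n j a b \<Longrightarrow> \<partial> n j True (a \<circ>\<^bsub>n,j\<^esub> b) = \<partial> n j True b"
  using laws by simp

lemma face_comp_less [simp]: "composable C (Suc n) j a b \<Longrightarrow> 1 \<le> i \<Longrightarrow> i < j \<Longrightarrow>
    \<partial> (Suc n) i \<alpha> (a \<circ>\<^bsub>Suc n,j\<^esub> b) = \<partial> (Suc n) i \<alpha> a \<circ>\<^bsub>n,j - 1\<^esub> \<partial> (Suc n) i \<alpha> b"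
  using laws by simp

lemma face_comp_greater [simp]: "composable C (Suc n) j a b \<Longrightarrow> j < i \<Longrightarrow> i \<le> Suc n \<Longrightarrow>
    \<partial> (Suc n) i \<alpha> (a \<circ>\<^bsub>Suc n,j\<^esub> b) = \<partial> (Suc n) i \<alpha> a \<circ>\<^bsub>n,j\<^esub> \<partial> (Suc n) i \<alpha> b"
  using laws by simp

lemma comp_interchange: "i \<noteq> j \<Longrightarrow> composable C n i a b \<Longrightarrow> composable C n i c d \<Longrightarrow>
    composable C n j a c \<Longrightarrow> composable C n j b d \<Longrightarrow>
    (a \<circ>\<^bsub>n,i\<^esub> b) \<circ>\<^bsub>n,j\<^esub> (c \<circ>\<^bsub>n,i\<^esub> d) = (a \<circ>\<^bsub>n,j\<^esub> c) \<circ>\<^bsub>n,i\<^esub> (b \<circ>\<^bsub>n,j\<^esub> d)"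
  using laws by simp

lemma degen_comp_le: "composable C n j a b \<Longrightarrow> 1 \<le> i \<Longrightarrow> i \<le> j \<Longrightarrow>
    \<epsilon> n i (a \<circ>\<^bsub>n,j\<^esub> b) = \<epsilon> n i a \<circ>\<^bsub>Suc n,Suc j\<^esub> \<epsilon> n i b"
  using laws by (simp add: composable_def)

lemma degen_comp_greater: "composable C n j a b \<Longrightarrow> j < i \<Longrightarrow> i \<le> Suc n \<Longrightarrow>
    \<epsilon> n i (a \<circ>\<^bsub>n,j\<^esub> b) = \<epsilon> n i a \<circ>\<^bsub>Suc n,j\<^esub> \<epsilon> n i b"
  using laws by (simp add: composable_def)

lemma conn_comp_less: "composable C n j a b \<Longrightarrow> 1 \<le> i \<Longrightarrow> i < j \<Longrightarrow>
    \<Gamma> n i \<alpha> (a \<circ>\<^bsub>n,j\<^esub> b) = \<Gamma> n i \<alpha> a \<circ>\<^bsub>Suc n,Suc j\<^esub> \<Gamma> n i \<alpha> b"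
  using laws by (simp add: composable_def)

lemma conn_comp_greater: "composable C n j a b \<Longrightarrow> j < i \<Longrightarrow> i \<le> n \<Longrightarrow>
    \<Gamma> n i \<alpha> (a \<circ>\<^bsub>n,j\<^esub> b) = \<Gamma> n i \<alpha> a \<circ>\<^bsub>Suc n,j\<^esub> \<Gamma> n i \<alpha> b"
  using laws by (simp add: composable_def)

lemma conn_plus_comp: "composable C n j a b \<Longrightarrow>
    \<Gamma> n j True (a \<circ>\<^bsub>n,j\<^esub> b) =
      (\<Gamma> n j True a \<circ>\<^bsub>Suc n,j\<^esub> \<epsilon> n j a) \<circ>\<^bsub>Suc n,Suc j\<^esub> (\<epsilon> n (Suc j) a \<circ>\<^bsub>Suc n,j\<^esub> \<Gamma> n j True b)"
  using laws by simp

lemma conn_minus_comp: "composable C n j a b \<Longrightarrow>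
    \<Gamma> n j False (a \<circ>\<^bsub>n,j\<^esub> b) =
      (\<Gamma> n j False a \<circ>\<^bsub>Suc n,j\<^esub> \<epsilon> n (Suc j) b) \<circ>\<^bsub>Suc n,Suc j\<^esub> (\<epsilon> n j b \<circ>\<^bsub>Suc n,j\<^esub> \<Gamma> n j False b)"
  using laws by simp

lemma comp_assoc: "composable C n j a b \<Longrightarrow> composable C n j b c \<Longrightarrow>
    (a \<circ>\<^bsub>n,j\<^esub> b) \<circ>\<^bsub>n,j\<^esub> c = a \<circ>\<^bsub>n,j\<^esub> (b \<circ>\<^bsub>n,j\<^esub> c)"
  using laws by simp

lemma comp_units: "a \<in> G n \<Longrightarrow> 1 \<le> j \<Longrightarrow> j \<le> n \<Longrightarrow>
    \<epsilon> (n - 1) j (\<partial> n j False a) \<circ>\<^bsub>n,j\<^esub> a = a \<and> a \<circ>\<^bsub>n,j\<^esub> \<epsilon> (n - 1) j (\<partial> n j True a) = a"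
  using laws by blast

lemma comp_degen_left [simp]:
  assumes "composable C (Suc n) j (\<epsilon> n j y) a" and "y \<in> G n"
  shows "\<epsilon> n j y \<circ>\<^bsub>Suc n,j\<^esub> a = a"
proof -
  from assms have "y = \<partial> (Suc n) j False a" "1 \<le> j" "j \<le> Suc n" "a \<in> G (Suc n)"
    by (auto simp: composable_def)
  with comp_units[of a "Suc n" j] show ?thesis by simp
qed

lemma comp_degen_right [simp]:
  assumes "composable C (Suc n) j a (\<epsilon> n j y)" and "y \<in> G n"
  shows "a \<circ>\<^bsub>Suc n,j\<^esub> \<epsilon> n j y = a"
proof -
  from assms have "y = \<partial> (Suc n) j True a" "1 \<le> j" "j \<le> Suc n" "a \<in> G (Suc n)"
    by (auto simp: composable_def)
  with comp_units[of a "Suc n" j] show ?thesis by simp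
qed

lemma conn_plus_comp_conn_minus [simp]: "x \<in> G n \<Longrightarrow> 1 \<le> i \<Longrightarrow> i \<le> n \<Longrightarrow>
    \<Gamma> n i True x \<circ>\<^bsub>Suc n,i\<^esub> \<Gamma> n i False x = \<epsilon> n (Suc i) x"
  using laws by simp

lemma conn_plus_comp_succ_conn_minus [simp]: "x \<in> G n \<Longrightarrow> 1 \<le> i \<Longrightarrow> i \<le> n \<Longrightarrow>
    \<Gamma> n i True x \<circ>\<^bsub>Suc n,Suc i\<^esub> \<Gamma> n i False x = \<epsilon> n i x"
  using laws by simp

abbreviation "\<psi> \<equiv> psi C"

lemma psi_closed [simp]: "y \<in> G (Suc n) \<Longrightarrow> 1 \<le> i \<Longrightarrow> i \<le> n \<Longrightarrow> \<psi> (Suc n) i y \<in> G (Suc n)"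
  by (simp add: psi_def composable_def)

lemma psi_degen_same: "x \<in> G n \<Longrightarrow> 1 \<le> i \<Longrightarrow> i \<le> n \<Longrightarrow> \<psi> (Suc n) i (\<epsilon> n i x) = \<epsilon> n i x"
  by (cases n) (simp_all add: psi_def composable_def conn_degen_same)

lemma psi_degen_succ: "x \<in> G n \<Longrightarrow> 1 \<le> i \<Longrightarrow> i \<le> n \<Longrightarrow> \<psi> (Suc n) i (\<epsilon> n (Suc i) x) = \<epsilon> n i x"
  by (simp add: psi_def composable_def)

lemma psi_degen_less: "x \<in> G n \<Longrightarrow> 1 \<le> j \<Longrightarrow> j < i \<Longrightarrow> i \<le> n \<Longrightarrow>
    \<psi> (Suc n) i (\<epsilon> n j x) = \<epsilon> n j (\<psi> n (i - 1) x)"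
  by (cases n; cases i) (simp_all add: psi_def composable_def conn_degen_greater degen_comp_le)

lemma psi_degen_greater: "x \<in> G n \<Longrightarrow> 1 \<le> i \<Longrightarrow> Suc i < j \<Longrightarrow> j \<le> Suc n \<Longrightarrow>
    \<psi> (Suc n) i (\<epsilon> n j x) = \<epsilon> n j (\<psi> n i x)"
  by (cases n) (simp_all add: psi_def composable_def conn_degen_less degen_comp_greater)

lemma psi_conn_same: "x \<in> G n \<Longrightarrow> 1 \<le> i \<Longrightarrow> i \<le> n \<Longrightarrow> \<psi> (Suc n) i (\<Gamma> n i \<alpha> x) = \<epsilon> n i x"
  by (cases n; cases \<alpha>) (simp_all add: psi_def composable_def conn_degen_same)

lemma psi_conn_less: "x \<in> G n \<Longrightarrow> 1 \<le> j \<Longrightarrow> j + 2 \<le> i \<Longrightarrow> i \<le> n \<Longrightarrow>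
    \<psi> (Suc n) i (\<Gamma> n j \<beta> x) = \<Gamma> n j \<beta> (\<psi> n (i - 1) x)"
  by (cases n; cases i) (simp_all add: psi_def composable_def conn_conn_less[symmetric] conn_comp_less)

lemma psi_conn_greater: "x \<in> G n \<Longrightarrow> 1 \<le> i \<Longrightarrow> i + 2 \<le> j \<Longrightarrow> j \<le> n \<Longrightarrow>
    \<psi> (Suc n) i (\<Gamma> n j \<beta> x) = \<Gamma> n j \<beta> (\<psi> n i x)"
  by (cases n; cases j) (simp_all add: psi_def composable_def conn_conn_less conn_comp_greater)

lemma conn_minus_conn_plus_factor:
  assumes w: "w \<in> G n" and i: "1 \<le> i" "i \<le> n"
  shows "\<epsilon> (Suc n) i (\<Gamma> n i True w) \<circ>\<^bsub>Suc (Suc n),Suc (Suc i)\<^esub>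
           (\<Gamma> (Suc n) (Suc i) False (\<Gamma> n i True w) \<circ>\<^bsub>Suc (Suc n),Suc i\<^esub> \<epsilon> (Suc n) (Suc (Suc i)) (\<Gamma> n i False w))
         = \<Gamma> (Suc n) i False (\<Gamma> n i True w)"
proof -
  let ?N = "Suc n" and ?M = "Suc (Suc n)" and ?b = "Suc i" and ?c = "Suc (Suc i)"
  let ?P = "\<Gamma> n i True w" and ?Q = "\<Gamma> n i False w"
  have "\<epsilon> ?N i ?P = \<Gamma> ?N ?b True ?P \<circ>\<^bsub>?M,?c\<^esub> (\<epsilon> ?N ?c ?P \<circ>\<^bsub>?M,?b\<^esub> \<Gamma> ?N ?b True ?Q)"
    using conn_plus_comp[of ?N ?b ?P ?Q] w i by (simp add: composable_def conn_degen_greater)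
  then have "\<epsilon> ?N i ?P \<circ>\<^bsub>?M,?c\<^esub> (\<Gamma> ?N ?b False ?P \<circ>\<^bsub>?M,?b\<^esub> \<epsilon> ?N ?c ?Q)
      = \<Gamma> ?N ?b True ?P \<circ>\<^bsub>?M,?c\<^esub> ((\<epsilon> ?N ?c ?P \<circ>\<^bsub>?M,?b\<^esub> \<Gamma> ?N ?b True ?Q) \<circ>\<^bsub>?M,?c\<^esub> (\<Gamma> ?N ?b False ?P \<circ>\<^bsub>?M,?b\<^esub> \<epsilon> ?N ?c ?Q))"
    using w i by (simp add: comp_assoc composable_def)
  also have "\<dots> = \<Gamma> ?N ?b True ?P \<circ>\<^bsub>?M,?c\<^esub> (\<Gamma> ?N ?b False ?P \<circ>\<^bsub>?M,?b\<^esub> \<Gamma> ?N ?b True ?Q)"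
    using w i by (subst comp_interchange) (simp_all add: composable_def)
  also have "\<dots> = (\<Gamma> ?N ?b True ?P \<circ>\<^bsub>?M,?b\<^esub> \<epsilon> ?N ?b ?P) \<circ>\<^bsub>?M,?c\<^esub> (\<Gamma> ?N ?b False ?P \<circ>\<^bsub>?M,?b\<^esub> \<Gamma> ?N ?b True ?Q)"
    using w i by (simp add: composable_def)
  also have "\<dots> = \<epsilon> ?N ?b ?P \<circ>\<^bsub>?M,?c\<^esub> \<Gamma> ?N ?b True ?Q"
    using w i by (subst comp_interchange) (simp_all add: composable_def)
  also have "\<dots> = (\<epsilon> ?N ?b ?P \<circ>\<^bsub>?M,?c\<^esub> \<Gamma> ?N ?b True ?Q) \<circ>\<^bsub>?M,?b\<^esub> \<epsilon> ?N ?b (\<epsilon> n i w)"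
    using w i by (simp add: composable_def)
  also have "\<dots> = (\<epsilon> ?N ?b ?P \<circ>\<^bsub>?M,?c\<^esub> \<Gamma> ?N ?b True ?Q) \<circ>\<^bsub>?M,?b\<^esub> (\<Gamma> ?N i False ?P \<circ>\<^bsub>?M,?c\<^esub> \<Gamma> ?N ?b False ?Q)"
    using conn_comp_less[of ?N ?b ?P ?Q i False] w i
    by (simp add: composable_def conn_conn_same conn_degen_same)
  also have "\<dots> = (\<epsilon> ?N ?b ?P \<circ>\<^bsub>?M,?b\<^esub> \<Gamma> ?N i False ?P) \<circ>\<^bsub>?M,?c\<^esub> (\<Gamma> ?N ?b True ?Q \<circ>\<^bsub>?M,?b\<^esub> \<Gamma> ?N ?b False ?Q)"
    using w i by (subst comp_interchange) (simp_all add: composable_def)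
  also have "\<dots> = \<Gamma> ?N i False ?P"
    using w i by (simp add: composable_def)
  finally show ?thesis .
qed

lemma conn_minus_fold_right:
  assumes x: "x \<in> G (Suc n)" and i: "1 \<le> i" "i \<le> n"
  defines "R \<equiv> x \<circ>\<^bsub>Suc n,Suc i\<^esub> \<Gamma> n i False (\<partial> (Suc n) (Suc i) True x)"
  shows "(\<Gamma> (Suc n) (Suc i) True x \<circ>\<^bsub>Suc (Suc n),Suc i\<^esub> \<Gamma> (Suc n) i False x) \<circ>\<^bsub>Suc (Suc n),Suc (Suc i)\<^esub> \<Gamma> (Suc n) (Suc i) False R
    = \<Gamma> (Suc n) i False R"
proof -
  let ?N = "Suc n" and ?M = "Suc (Suc n)" and ?b = "Suc i" and ?c = "Suc (Suc i)"
  let ?Q = "\<Gamma> n i False (\<partial> ?N ?b True x)"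
  let ?S = "\<Gamma> ?N ?b True x \<circ>\<^bsub>?M,?b\<^esub> \<Gamma> ?N i False x"
  have "?S \<circ>\<^bsub>?M,?c\<^esub> \<Gamma> ?N ?b False R
      = ?S \<circ>\<^bsub>?M,?c\<^esub> ((\<Gamma> ?N ?b False x \<circ>\<^bsub>?M,?b\<^esub> \<epsilon> ?N ?c ?Q) \<circ>\<^bsub>?M,?c\<^esub> (\<epsilon> ?N ?b ?Q \<circ>\<^bsub>?M,?b\<^esub> \<Gamma> ?N ?b False ?Q))"
    unfolding R_def using x i by (subst conn_minus_comp) (simp_all add: composable_def)
  also have "\<dots> = (?S \<circ>\<^bsub>?M,?c\<^esub> (\<Gamma> ?N ?b False x \<circ>\<^bsub>?M,?b\<^esub> \<epsilon> ?N ?c ?Q)) \<circ>\<^bsub>?M,?c\<^esub> (\<epsilon> ?N ?b ?Q \<circ>\<^bsub>?M,?b\<^esub> \<Gamma> ?N ?b False ?Q)"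
    using x i by (subst comp_assoc) (simp_all add: composable_def)
  also have "\<dots> = (\<epsilon> ?N ?b x \<circ>\<^bsub>?M,?b\<^esub> \<Gamma> ?N i False x) \<circ>\<^bsub>?M,?c\<^esub> (\<epsilon> ?N ?b ?Q \<circ>\<^bsub>?M,?b\<^esub> \<Gamma> ?N ?b False ?Q)"
    using x i by (subst comp_interchange) (simp_all add: composable_def)
  also have "\<dots> = (\<epsilon> ?N ?b x \<circ>\<^bsub>?M,?c\<^esub> \<epsilon> ?N ?b ?Q) \<circ>\<^bsub>?M,?b\<^esub> (\<Gamma> ?N i False x \<circ>\<^bsub>?M,?c\<^esub> \<Gamma> ?N ?b False ?Q)"
    using x i by (subst comp_interchange) (simp_all add: composable_def)
  also have "\<dots> = \<epsilon> ?N ?b R \<circ>\<^bsub>?M,?b\<^esub> \<Gamma> ?N i False R"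
    unfolding R_def using x i
    by (simp add: composable_def degen_comp_le conn_comp_less conn_conn_same)
  also have "\<dots> = \<Gamma> ?N i False R"
    unfolding R_def using x i by (simp add: composable_def)
  finally show ?thesis .
qed

lemma psi_conn_plus_comp_conn_minus:
  assumes x: "x \<in> G (Suc n)" and i: "1 \<le> i" "i \<le> n"
  defines "P \<equiv> \<Gamma> n i True (\<partial> (Suc n) (Suc i) False x)"
    and "R \<equiv> x \<circ>\<^bsub>Suc n,Suc i\<^esub> \<Gamma> n i False (\<partial> (Suc n) (Suc i) True x)"
  shows "\<psi> (Suc (Suc n)) i (\<Gamma> (Suc n) (Suc i) True x) \<circ>\<^bsub>Suc (Suc n),Suc (Suc i)\<^esub> \<Gamma> (Suc n) (Suc i) False (\<psi> (Suc n) i x)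
    = (\<Gamma> (Suc n) (Suc i) False P \<circ>\<^bsub>Suc (Suc n),Suc (Suc i)\<^esub> \<epsilon> (Suc n) (Suc i) R) \<circ>\<^bsub>Suc (Suc n),Suc i\<^esub> \<Gamma> (Suc n) i False R"
proof -
  let ?N = "Suc n" and ?M = "Suc (Suc n)" and ?b = "Suc i" and ?c = "Suc (Suc i)"
  let ?S = "\<Gamma> ?N ?b True x \<circ>\<^bsub>?M,?b\<^esub> \<Gamma> ?N i False x"
  have "\<psi> ?M i (\<Gamma> ?N ?b True x) = \<epsilon> ?N ?c P \<circ>\<^bsub>?M,?b\<^esub> ?S"
    unfolding P_def using x i by (simp add: psi_def composable_def comp_assoc conn_degen_less)
  moreover have "\<psi> ?N i x = P \<circ>\<^bsub>?N,?b\<^esub> R"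
    unfolding P_def R_def using x i by (simp add: psi_def composable_def comp_assoc)
  ultimately have "\<psi> ?M i (\<Gamma> ?N ?b True x) \<circ>\<^bsub>?M,?c\<^esub> \<Gamma> ?N ?b False (\<psi> ?N i x)
      = (\<epsilon> ?N ?c P \<circ>\<^bsub>?M,?b\<^esub> ?S) \<circ>\<^bsub>?M,?c\<^esub> ((\<Gamma> ?N ?b False P \<circ>\<^bsub>?M,?b\<^esub> \<epsilon> ?N ?c R) \<circ>\<^bsub>?M,?c\<^esub> \<Gamma> ?N ?b False R)"
    unfolding P_def R_def using x i by (simp add: conn_minus_comp composable_def)
  also have "\<dots> = ((\<epsilon> ?N ?c P \<circ>\<^bsub>?M,?b\<^esub> ?S) \<circ>\<^bsub>?M,?c\<^esub> (\<Gamma> ?N ?b False P \<circ>\<^bsub>?M,?b\<^esub> \<epsilon> ?N ?c R)) \<circ>\<^bsub>?M,?c\<^esub> \<Gamma> ?N ?b False R"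
    unfolding P_def R_def using x i by (subst comp_assoc) (simp_all add: composable_def)
  also have "\<dots> = (\<Gamma> ?N ?b False P \<circ>\<^bsub>?M,?b\<^esub> ?S) \<circ>\<^bsub>?M,?c\<^esub> (\<epsilon> ?N ?b R \<circ>\<^bsub>?M,?b\<^esub> \<Gamma> ?N ?b False R)"
    unfolding P_def R_def using x i by (subst comp_interchange) (simp_all add: composable_def)
  also have "\<dots> = (\<Gamma> ?N ?b False P \<circ>\<^bsub>?M,?c\<^esub> \<epsilon> ?N ?b R) \<circ>\<^bsub>?M,?b\<^esub> (?S \<circ>\<^bsub>?M,?c\<^esub> \<Gamma> ?N ?b False R)"
    unfolding P_def R_def using x i by (subst comp_interchange) (simp_all add: composable_def)
  also have "?S \<circ>\<^bsub>?M,?c\<^esub> \<Gamma> ?N ?b False R = \<Gamma> ?N i False R"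
    unfolding R_def using x i by (rule conn_minus_fold_right)
  finally show ?thesis .
qed

lemma psi_succ_psi_conn_plus:
  assumes x: "x \<in> G (Suc n)" and i: "1 \<le> i" "i \<le> n"
  shows "\<psi> (Suc (Suc n)) (Suc i) (\<psi> (Suc (Suc n)) i (\<Gamma> (Suc n) (Suc i) True x))
    = \<Gamma> (Suc n) i False (\<psi> (Suc n) i x)"
proof -
  let ?N = "Suc n" and ?M = "Suc (Suc n)" and ?b = "Suc i" and ?c = "Suc (Suc i)"
  let ?P = "\<Gamma> n i True (\<partial> ?N ?b False x)" and ?Q = "\<Gamma> n i False (\<partial> ?N ?b False x)"
  let ?R = "x \<circ>\<^bsub>?N,?b\<^esub> \<Gamma> n i False (\<partial> ?N ?b True x)"
  let ?Z = "\<psi> ?M i (\<Gamma> ?N ?b True x)"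
  have psi_x: "\<psi> ?N i x = ?P \<circ>\<^bsub>?N,?b\<^esub> ?R"
    using x i by (simp add: psi_def composable_def comp_assoc)
  have "\<psi> ?M ?b ?Z = (\<epsilon> ?N i ?P \<circ>\<^bsub>?M,?c\<^esub> ?Z) \<circ>\<^bsub>?M,?c\<^esub> \<Gamma> ?N ?b False (\<psi> ?N i x)"
    using x i by (simp add: psi_def composable_def conn_degen_less conn_degen_greater)
  also have "\<dots> = \<epsilon> ?N i ?P \<circ>\<^bsub>?M,?c\<^esub> (?Z \<circ>\<^bsub>?M,?c\<^esub> \<Gamma> ?N ?b False (\<psi> ?N i x))"
    using x i by (subst comp_assoc) (simp_all add: psi_def composable_def conn_degen_less conn_degen_greater)
  also have "?Z \<circ>\<^bsub>?M,?c\<^esub> \<Gamma> ?N ?b False (\<psi> ?N i x)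
      = (\<Gamma> ?N ?b False ?P \<circ>\<^bsub>?M,?c\<^esub> \<epsilon> ?N ?b ?R) \<circ>\<^bsub>?M,?b\<^esub> \<Gamma> ?N i False ?R"
    using x i by (rule psi_conn_plus_comp_conn_minus)
  also have "\<dots> = (\<Gamma> ?N ?b False ?P \<circ>\<^bsub>?M,?b\<^esub> \<epsilon> ?N ?c ?Q) \<circ>\<^bsub>?M,?c\<^esub> \<Gamma> ?N i False ?R"
  proof -
    have "(\<Gamma> ?N ?b False ?P \<circ>\<^bsub>?M,?b\<^esub> \<epsilon> ?N ?c ?Q) \<circ>\<^bsub>?M,?c\<^esub> (\<epsilon> ?N ?b ?R \<circ>\<^bsub>?M,?b\<^esub> \<Gamma> ?N i False ?R)
        = (\<Gamma> ?N ?b False ?P \<circ>\<^bsub>?M,?c\<^esub> \<epsilon> ?N ?b ?R) \<circ>\<^bsub>?M,?b\<^esub> (\<epsilon> ?N ?c ?Q \<circ>\<^bsub>?M,?c\<^esub> \<Gamma> ?N i False ?R)"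
      using x i by (intro comp_interchange) (simp_all add: composable_def)
    then show ?thesis
      using x i by (simp add: composable_def)
  qed
  also have "\<epsilon> ?N i ?P \<circ>\<^bsub>?M,?c\<^esub> (\<dots>) = (\<epsilon> ?N i ?P \<circ>\<^bsub>?M,?c\<^esub> (\<Gamma> ?N ?b False ?P \<circ>\<^bsub>?M,?b\<^esub> \<epsilon> ?N ?c ?Q)) \<circ>\<^bsub>?M,?c\<^esub> \<Gamma> ?N i False ?R"
    using x i by (subst comp_assoc) (simp_all add: composable_def)
  also have "\<dots> = \<Gamma> ?N i False ?P \<circ>\<^bsub>?M,?c\<^esub> \<Gamma> ?N i False ?R"
    using x i by (simp add: conn_minus_conn_plus_factor)
  also have "\<dots> = \<Gamma> ?N i False (\<psi> ?N i x)"
    unfolding psi_x using x i by (simp add: conn_comp_less composable_def)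
  finally show ?thesis .
qed

lemma psi_reverse:
  "x \<in> G (Suc n) \<Longrightarrow> 1 \<le> i \<Longrightarrow> i \<le> n \<Longrightarrow> psi (reverse C) (Suc n) i x = \<psi> (Suc n) i x"
  by (simp add: psi_def composable_def comp_assoc)

lemma psi_succ_psi_conn_succ:
  assumes x: "x \<in> G n" and i: "1 \<le> i" "Suc i \<le> n"
  shows "\<psi> (Suc n) (Suc i) (\<psi> (Suc n) i (\<Gamma> n (Suc i) \<alpha> x)) = \<Gamma> n i (\<not> \<alpha>) (\<psi> n i x)"
proof -
  obtain m where n: "n = Suc m" using i by (cases n) auto
  show ?thesis
  proof (cases \<alpha>)
    case True
    then show ?thesis using psi_succ_psi_conn_plus x i unfolding n by simp
  next
    case False
    interpret reverse: cubical_omega_category "reverse C"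
      by standard (rule cubical_omega_cat_conn_reverse[OF axioms])
    have "psi (reverse C) (Suc n) (Suc i) (psi (reverse C) (Suc n) i (conn (reverse C) n (Suc i) True x))
        = conn (reverse C) n i False (psi (reverse C) n i x)"
      using reverse.psi_succ_psi_conn_plus x i unfolding n by simp
    then show ?thesis
      using False x i unfolding n by (simp add: psi_reverse)
  qed
qed

abbreviation "\<Psi> \<equiv> Psi C"
abbreviation "\<Phi> \<equiv> Phi C"

lemma Psi_Suc: "1 \<le> r \<Longrightarrow> \<Psi> k (Suc r) x = \<psi> k r (\<Psi> k r x)"
  by (cases r) auto

lemma Psi_closed: "x \<in> G n \<Longrightarrow> r \<le> n \<Longrightarrow> \<Psi> n r x \<in> G n"
proof (induction r)
  case (Suc r)
  then show ?case
    by (cases n; cases "r = 0") (simp_all add: Psi_Suc)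
qed simp

lemma Psi_degen_greater:
  "x \<in> G n \<Longrightarrow> r < j \<Longrightarrow> j \<le> Suc n \<Longrightarrow> \<Psi> (Suc n) r (\<epsilon> n j x) = \<epsilon> n j (\<Psi> n r x)"
proof (induction r)
  case (Suc r)
  then show ?case
    by (cases "r = 0") (simp_all add: Psi_Suc Psi_closed psi_degen_greater)
qed simp

lemma Psi_degen_le:
  assumes x: "x \<in> G n" and "1 \<le> j" "j \<le> r" "r \<le> Suc n"
  shows "\<Psi> (Suc n) r (\<epsilon> n j x) = \<epsilon> n (max 1 (j - 1)) (\<Psi> n (r - 1) x)"
  using \<open>j \<le> r\<close> \<open>r \<le> Suc n\<close>
proof (induction r rule: dec_induct)
  case base
  show ?case
  proof (cases "j = 1")
    case False
    then obtain k where "j = Suc k" "1 \<le> k" using \<open>1 \<le> j\<close> by (cases j) auto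
    then show ?thesis
      using x base by (simp add: Psi_Suc Psi_degen_greater Psi_closed psi_degen_succ)
  qed simp
next
  case (step s)
  then have IH: "\<Psi> (Suc n) s (\<epsilon> n j x) = \<epsilon> n (max 1 (j - 1)) (\<Psi> n (s - 1) x)" by simp
  show ?case
  proof (cases "max 1 (j - 1) < s")
    case True
    then have "\<Psi> n s x = \<psi> n (s - 1) (\<Psi> n (s - 1) x)"
      by (cases s) (simp_all add: Psi_Suc)
    then show ?thesis
      using x step IH True by (simp add: Psi_Suc Psi_closed psi_degen_less)
  next
    case False
    then have "s = 1" "j = 1" using step \<open>1 \<le> j\<close> by auto
    then show ?thesis using x step by (simp add: psi_degen_same)
  qed
qed

lemma Phi_degen:
  "x \<in> G n \<Longrightarrow> 1 \<le> i \<Longrightarrow> i \<le> m \<Longrightarrow> m \<le> Suc n \<Longrightarrow>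
    \<Phi> (Suc n) m (\<epsilon> n i x) = \<epsilon> n 1 (\<Phi> n (m - 1) x)"
proof (induction m arbitrary: i x)
  case (Suc m)
  show ?case
  proof (cases "m = 0")
    case False
    have "\<Phi> (Suc n) (Suc m) (\<epsilon> n i x) = \<Phi> (Suc n) m (\<epsilon> n (max 1 (i - 1)) (\<Psi> n m x))"
      using Suc.prems by (simp add: Psi_degen_le)
    also have "\<dots> = \<epsilon> n 1 (\<Phi> n (m - 1) (\<Psi> n m x))"
      using Suc.prems False by (intro Suc.IH) (auto simp: Psi_closed)
    finally show ?thesis
      using False by (cases m) simp_all
  qed (use Suc.prems in simp)
qed simp

lemma Psi_conn_greater:
  "x \<in> G n \<Longrightarrow> r < j \<Longrightarrow> j \<le> n \<Longrightarrow> \<Psi> (Suc n) r (\<Gamma> n j \<alpha> x) = \<Gamma> n j \<alpha> (\<Psi> n r x)"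
proof (induction r)
  case (Suc r)
  then show ?case
    by (cases "r = 0") (simp_all add: Psi_Suc Psi_closed psi_conn_greater)
qed simp

lemma Psi_conn_less:
  assumes x: "x \<in> G n" and "1 \<le> j" "j < r" "r \<le> Suc n"
  shows "\<Psi> (Suc n) r (\<Gamma> n j \<alpha> x)
    = (if j = 1 then \<epsilon> n 1 (\<Psi> n (r - 1) x) else \<Gamma> n (j - 1) (\<not> \<alpha>) (\<Psi> n (r - 1) x))"
  using Suc_leI[OF \<open>j < r\<close>] \<open>r \<le> Suc n\<close>
proof (induction r rule: dec_induct)
  case base
  show ?case
  proof (cases "j = 1")
    case True
    then show ?thesis using x base by (simp add: psi_conn_same)
  next
    case False
    then obtain k where k: "j = Suc k" "1 \<le> k" using \<open>1 \<le> j\<close> by (cases j) auto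
    have "\<Psi> (Suc n) (Suc j) (\<Gamma> n j \<alpha> x) = \<psi> (Suc n) j (\<psi> (Suc n) k (\<Gamma> n j \<alpha> (\<Psi> n k x)))"
      using x k base by (simp add: Psi_Suc Psi_conn_greater)
    also have "\<dots> = \<Gamma> n k (\<not> \<alpha>) (\<psi> n k (\<Psi> n k x))"
      using x k base by (simp add: Psi_closed psi_succ_psi_conn_succ)
    finally show ?thesis
      using k by (simp add: Psi_Suc)
  qed
next
  case (step s)
  then have IH: "\<Psi> (Suc n) s (\<Gamma> n j \<alpha> x)
      = (if j = 1 then \<epsilon> n 1 (\<Psi> n (s - 1) x) else \<Gamma> n (j - 1) (\<not> \<alpha>) (\<Psi> n (s - 1) x))"
    by simp
  have "\<Psi> n s x = \<psi> n (s - 1) (\<Psi> n (s - 1) x)"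
    using step \<open>1 \<le> j\<close> by (cases s) (simp_all add: Psi_Suc)
  then show ?case
    using x step IH \<open>1 \<le> j\<close>
    by (simp add: Psi_Suc Psi_closed psi_degen_less psi_conn_less)
qed

lemma Phi_conn:
  "x \<in> G n \<Longrightarrow> 1 \<le> j \<Longrightarrow> j < m \<Longrightarrow> m \<le> Suc n \<Longrightarrow>
    \<Phi> (Suc n) m (\<Gamma> n j \<alpha> x) = \<epsilon> n 1 (\<Phi> n (m - 1) x)"
proof (induction m arbitrary: j \<alpha> x)
  case (Suc m)
  have "\<Phi> (Suc n) m (\<Psi> (Suc n) (Suc m) (\<Gamma> n j \<alpha> x)) = \<epsilon> n 1 (\<Phi> n (m - 1) (\<Psi> n m x))"
  proof (cases "j = 1")
    case True
    then show ?thesis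
      using Suc.prems by (simp add: Psi_conn_less Psi_closed Phi_degen)
  next
    case False
    then show ?thesis
      using Suc.prems by (simp add: Psi_conn_less Psi_closed Suc.IH)
  qed
  then show ?case
    using Suc.prems by (cases m) simp_all
qed simp

end

theorem theorem5p6:
  fixes C :: "'a cubical_data" and m n :: nat
  assumes "cubical_omega_cat_conn C"
    and "1 \<le> m" and "m \<le> n"
  shows "(\<forall>i x. 1 \<le> i \<and> i \<le> m \<and> x \<in> cells C (n - 1) \<longrightarrow>
            Phi C n m (degen C (n - 1) i x) = degen C (n - 1) 1 (Phi C (n - 1) (m - 1) x))
       \<and> (\<forall>i \<alpha> x. 1 \<le> i \<and> i \<le> m - 1 \<and> x \<in> cells C (n - 1) \<longrightarrow>
            Phi C n m (conn C (n - 1) i \<alpha> x) = degen C (n - 1) 1 (Phi C (n - 1) (m - 1) x))"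
proof -
  interpret cubical_omega_category C
    by standard (rule assms(1))
  obtain p where n: "n = Suc p"
    using assms by (cases n) auto
  show ?thesis
    using assms(2,3) Phi_degen[of _ p] Phi_conn[of _ p] unfolding n by auto
qed

end
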